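(* A regular Lie algebra (finite-dimensional, over an infinite field $K$) which is not semisimple (i.e. has a nonzero solvable ideal) is nilpotent.
   Context: All algebras are finite-dimensional over an infinite field $K$. For $x\in L$ write $\chi_{\operatorname{ad} x}(t)=\det(t-\operatorname{ad}x)=\sum_{i}a_i(x)t^i$. The rank $\operatorname{rk}L$ is the minimal $r$ such that $a_r(x)\neq 0$ for some $x\in L$. An element $x$ is regular if $a_{\operatorname{rk}L}(x)\neq 0$. A Lie algebra is regular if each of its nonzero elements is regular. A Lie algebra is semisimple if its solvable radical is zero. *)

theory Defs
  imports "HOL-Analysis.Analysis" "HOL-Computational_Algebra.Polynomial"
begin

text \<open>A finite-dimensional Lie algebra over a field 'k is modelled (after choosing a
basis) as the coordinate space 'k^'n together with a bracket br.\<close>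

definition lie_algebra :: "('k::field^'n \<Rightarrow> 'k^'n \<Rightarrow> 'k^'n) \<Rightarrow> bool" where
  "lie_algebra br \<longleftrightarrow>
     (\<forall>x y z. br (x + y) z = br x z + br y z) \<and>
     (\<forall>x y z. br x (y + z) = br x y + br x z) \<and>
     (\<forall>c x y. br (c *s x) y = c *s br x y) \<and>
     (\<forall>c x y. br x (c *s y) = c *s br x y) \<and>
     (\<forall>x. br x x = 0) \<and>
     (\<forall>x y z. br x (br y z) + br y (br z x) + br z (br x y) = 0)"

definition ad_matrix :: "('k::field^'n \<Rightarrow> 'k^'n \<Rightarrow> 'k^'n) \<Rightarrow> 'k^'n \<Rightarrow> 'k^'n^'n" where
  "ad_matrix br x = (\<chi> i j. br x (axis j 1) $ i)"

definition ad_charpoly :: "('k::field^'n \<Rightarrow> 'k^'n \<Rightarrow> 'k^'n) \<Rightarrow> 'k^'n \<Rightarrow> 'k poly" where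
  "ad_charpoly br x =
     det (\<chi> i j. (if i = j then [:0, 1:] else 0) - [:ad_matrix br x $ i $ j:])"

definition lie_rank :: "('k::field^'n \<Rightarrow> 'k^'n \<Rightarrow> 'k^'n) \<Rightarrow> nat" where
  "lie_rank br = (LEAST r. \<exists>x. coeff (ad_charpoly br x) r \<noteq> 0)"

definition regular_element :: "('k::field^'n \<Rightarrow> 'k^'n \<Rightarrow> 'k^'n) \<Rightarrow> 'k^'n \<Rightarrow> bool" where
  "regular_element br x \<longleftrightarrow> coeff (ad_charpoly br x) (lie_rank br) \<noteq> 0"

definition regular_lie_algebra :: "('k::field^'n \<Rightarrow> 'k^'n \<Rightarrow> 'k^'n) \<Rightarrow> bool" where
  "regular_lie_algebra br \<longleftrightarrow> (\<forall>x. x \<noteq> 0 \<longrightarrow> regular_element br x)"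

definition lie_ideal :: "('k::field^'n \<Rightarrow> 'k^'n \<Rightarrow> 'k^'n) \<Rightarrow> ('k^'n) set \<Rightarrow> bool" where
  "lie_ideal br I \<longleftrightarrow> vec.subspace I \<and> (\<forall>x y. y \<in> I \<longrightarrow> br x y \<in> I)"

fun derived_series :: "('k::field^'n \<Rightarrow> 'k^'n \<Rightarrow> 'k^'n) \<Rightarrow> ('k^'n) set \<Rightarrow> nat \<Rightarrow> ('k^'n) set" where
  "derived_series br I 0 = I"
| "derived_series br I (Suc k) =
     vec.span {br a b | a b. a \<in> derived_series br I k \<and> b \<in> derived_series br I k}"

definition solvable_subalg :: "('k::field^'n \<Rightarrow> 'k^'n \<Rightarrow> 'k^'n) \<Rightarrow> ('k^'n) set \<Rightarrow> bool" where
  "solvable_subalg br I \<longleftrightarrow> (\<exists>k. derived_series br I k = {0})"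

text \<open>Semisimple: the solvable radical (largest solvable ideal) is zero, i.e. every
solvable ideal is zero.\<close>
definition semisimple :: "('k::field^'n \<Rightarrow> 'k^'n \<Rightarrow> 'k^'n) \<Rightarrow> bool" where
  "semisimple br \<longleftrightarrow> (\<forall>I. lie_ideal br I \<and> solvable_subalg br I \<longrightarrow> I = {0})"

fun lower_central :: "('k::field^'n \<Rightarrow> 'k^'n \<Rightarrow> 'k^'n) \<Rightarrow> nat \<Rightarrow> ('k^'n) set" where
  "lower_central br 0 = UNIV"
| "lower_central br (Suc k) = vec.span {br a b | a b. b \<in> lower_central br k}"

definition nilpotent_lie :: "('k::field^'n \<Rightarrow> 'k^'n \<Rightarrow> 'k^'n) \<Rightarrow> bool" where
  "nilpotent_lie br \<longleftrightarrow> (\<exists>k. lower_central br k = {0})"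

end

theory Submission
  imports Defs
begin

text \<open>Let I be a nonzero solvable ideal of L. The last nonzero term J of its derived series
is an abelian ideal, so \<open>(ad a)\<^sup>2 = 0\<close> for a in J; then \<open>(t - ad a)(t + ad a) = t\<^sup>2\<close>
forces \<open>det (t - ad a) = t\<^sup>n\<close>, where n = dim L. A nonzero such a is regular, so the rank of
L is n, i.e. \<open>det (t - ad x) = t\<^sup>n\<close> for every x. By Cayley-Hamilton every ad x is then
nilpotent, and Engel's theorem shows that L is nilpotent.\<close>

locale lie_alg =
  fixes br :: "'k::field^'n \<Rightarrow> 'k^'n \<Rightarrow> 'k^'n"
  assumes lie: "lie_algebra br"
begin

lemma bracket_add_left: "br (x + y) z = br x z + br y z"
  using lie unfolding lie_algebra_def by blast

lemma bracket_add_right: "br x (y + z) = br x y + br x z"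
  using lie unfolding lie_algebra_def by blast

lemma bracket_scale_left: "br (c *s x) y = c *s br x y"
  using lie unfolding lie_algebra_def by blast

lemma bracket_scale_right: "br x (c *s y) = c *s br x y"
  using lie unfolding lie_algebra_def by blast

lemma bracket_self [simp]: "br x x = 0"
  using lie unfolding lie_algebra_def by blast

lemma jacobi: "br x (br y z) + br y (br z x) + br z (br x y) = 0"
  using lie unfolding lie_algebra_def by blast

lemma bracket_zero_right [simp]: "br x 0 = 0"
  using bracket_add_right[of x 0 0] by simp

lemma bracket_zero_left [simp]: "br 0 x = 0"
  using bracket_add_left[of 0 0 x] by simp

lemma bracket_neg_right: "br x (- y) = - br x y"
  using bracket_add_right[of x y "- y"] by (simp add: eq_neg_iff_add_eq_0 add.commute)

lemma bracket_antisym: "br y x = - br x y"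
proof -
  have "0 = br (x + y) (x + y)" by simp
  also have "\<dots> = br x x + br x y + (br y x + br y y)"
    by (simp only: bracket_add_left bracket_add_right add_ac)
  finally have "br x y + br y x = 0" by simp
  then show ?thesis by (simp add: eq_neg_iff_add_eq_0 add.commute)
qed

lemma bracket_leibniz: "br h (br z w) = br z (br h w) + br (br h z) w"
proof -
  have "br h (br z w) + br z (br w h) + br w (br h z) = 0"
    by (rule jacobi)
  moreover have "br z (br w h) = - br z (br h w)"
    by (simp add: bracket_antisym[of w h] bracket_neg_right)
  moreover have "br w (br h z) = - br (br h z) w"
    by (rule bracket_antisym)
  ultimately show ?thesis
    by (simp add: algebra_simps eq_neg_iff_add_eq_0)
qed

lemma linear_bracket: "Vector_Spaces.linear (*s) (*s) (br x)"
  by unfold_locales (simp_all add: bracket_add_right bracket_scale_right)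

lemma bracket_span_closed:
  assumes "vec.subspace U" and "\<And>g. g \<in> G \<Longrightarrow> br x g \<in> U" and "y \<in> vec.span G"
  shows "br x y \<in> U"
proof -
  have "vec.subspace {y. br x y \<in> U}"
    using assms(1) unfolding vec.subspace_def by (auto simp: bracket_add_right bracket_scale_right)
  then show ?thesis
    using vec.span_induct[OF assms(3), of "\<lambda>y. br x y \<in> U"] assms(2) by auto
qed

end

section \<open>Engel's theorem\<close>

definition lie_subalgebra :: "('k::field^'n \<Rightarrow> 'k^'n \<Rightarrow> 'k^'n) \<Rightarrow> ('k^'n) set \<Rightarrow> bool" where
  "lie_subalgebra br K \<longleftrightarrow> vec.subspace K \<and> (\<forall>a\<in>K. \<forall>b\<in>K. br a b \<in> K)"

definition ad_nilpotent :: "('k::field^'n \<Rightarrow> 'k^'n \<Rightarrow> 'k^'n) \<Rightarrow> 'k^'n \<Rightarrow> bool" where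
  "ad_nilpotent br x \<longleftrightarrow> (\<exists>N. \<forall>v. (br x ^^ N) v = 0)"

fun upper_central :: "('k::field^'n \<Rightarrow> 'k^'n \<Rightarrow> 'k^'n) \<Rightarrow> nat \<Rightarrow> ('k^'n) set" where
  "upper_central br 0 = {0}"
| "upper_central br (Suc i) = {v. \<forall>x. br x v \<in> upper_central br i}"

lemma dim_psubset_subspace:
  fixes H K :: "('k::field^'n) set"
  assumes "vec.subspace H" and "vec.subspace K" and "H \<subset> K"
  shows "vec.dim H < vec.dim K"
  using vec.dim_psubset[of H K] assms by (simp add: vec.span_eq_iff[THEN iffD2])

lemma ex_maximal_subspace:
  fixes P :: "('k::field^'n) set \<Rightarrow> bool"
  assumes "P A" and "\<And>H. P H \<Longrightarrow> vec.subspace H"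
  shows "\<exists>H. P H \<and> (\<forall>H'. P H' \<longrightarrow> \<not> H \<subset> H')"
proof -
  have "\<forall>H. P H \<longrightarrow> vec.dim H < Suc CARD('n)"
    by (metis dim_subset_UNIV_cart_gen le_imp_less_Suc)
  then obtain H where "P H" and "\<And>H'. P H' \<Longrightarrow> vec.dim H' \<le> vec.dim H"
    using ex_has_greatest_nat[of P A vec.dim] assms(1) by blast
  then show ?thesis
    using assms(2) dim_psubset_subspace by (meson leD)
qed

lemma span_insert_subspace_decomp:
  fixes H :: "('k::field^'n) set"
  assumes "vec.subspace H" and "a \<in> vec.span (insert z H)"
  shows "\<exists>h c. h \<in> H \<and> a = h + c *s z"
proof -
  obtain c where "a - c *s z \<in> H"
    using assms unfolding vec.span_insert vec.span_eq_iff[THEN iffD2, OF assms(1)] by blast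
  then show ?thesis by (intro exI[of _ "a - c *s z"] exI[of _ c]) auto
qed

lemma funpow_last_outside:
  assumes "(f ^^ N) w \<in> U" and "w \<in> W" and "w \<notin> U" and "\<And>v. v \<in> W \<Longrightarrow> f v \<in> W"
  shows "\<exists>v\<in>W. v \<notin> U \<and> f v \<in> U"
  using assms(1-3)
proof (induction N arbitrary: w)
  case 0
  then show ?case by simp
next
  case (Suc N)
  show ?case
  proof (cases "f w \<in> U")
    case False
    have "(f ^^ N) (f w) \<in> U"
      using Suc.prems(1) by (simp only: funpow_Suc_right comp_apply)
    then show ?thesis
      using Suc.IH[of "f w"] False Suc.prems(2) assms(4) by blast
  qed (use Suc.prems in blast)
qed

context lie_alg
begin

lemma lie_subalgebra_span_insert:
  assumes sub: "lie_subalgebra br H" and norm: "\<And>h. h \<in> H \<Longrightarrow> br h z \<in> H"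
  shows "lie_subalgebra br (vec.span (insert z H))"
  unfolding lie_subalgebra_def
proof (intro conjI ballI)
  have sH: "vec.subspace H" and cH: "\<And>a b. a \<in> H \<Longrightarrow> b \<in> H \<Longrightarrow> br a b \<in> H"
    using sub unfolding lie_subalgebra_def by auto
  show "vec.subspace (vec.span (insert z H))" by (rule vec.subspace_span)
  fix a b assume "a \<in> vec.span (insert z H)" "b \<in> vec.span (insert z H)"
  then obtain h1 c1 h2 c2 where h1: "h1 \<in> H" and a: "a = h1 + c1 *s z"
    and h2: "h2 \<in> H" and b: "b = h2 + c2 *s z"
    using span_insert_subspace_decomp[OF sH] by metis
  have "br a b = br h1 h2 + c2 *s br h1 z - c1 *s br h2 z"
    unfolding a b
    by (simp add: bracket_add_left bracket_add_right bracket_scale_left bracket_scale_right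
        bracket_antisym[of h2 z] algebra_simps)
  also have "\<dots> \<in> H"
    using cH[OF h1 h2] norm[OF h1] norm[OF h2] sH
    by (simp add: vec.subspace_add vec.subspace_diff vec.subspace_scale)
  finally show "br a b \<in> vec.span (insert z H)"
    by (meson subsetD subset_insertI vec.span_superset)
qed

lemma engel_step:
  assumes K: "K = vec.span (insert z H)" and sH: "vec.subspace H"
    and norm: "\<And>h. h \<in> H \<Longrightarrow> br h z \<in> H" and nil: "ad_nilpotent br z"
    and sU: "vec.subspace U"
    and invU: "\<And>k u. k \<in> K \<Longrightarrow> u \<in> U \<Longrightarrow> br k u \<in> U"
    and invW: "\<And>k w. k \<in> K \<Longrightarrow> w \<in> W \<Longrightarrow> br k w \<in> W"
    and w1: "w1 \<in> W" "w1 \<notin> U" "\<forall>h\<in>H. br h w1 \<in> U"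
  shows "\<exists>w\<in>W. w \<notin> U \<and> (\<forall>k\<in>K. br k w \<in> U)"
proof -
  define W0 where "W0 = {w \<in> W. \<forall>h\<in>H. br h w \<in> U}"
  have zK: "z \<in> K"
    unfolding K by (simp add: vec.span_base)
  have "br z w \<in> W0" if w: "w \<in> W0" for w
  proof -
    have "br h (br z w) \<in> U" if h: "h \<in> H" for h
    proof -
      have "br z (br h w) \<in> U" and "br (br h z) w \<in> U"
        using invU zK w h norm unfolding W0_def by auto
      then show ?thesis
        by (simp add: bracket_leibniz[of h z w] sU vec.subspace_add)
    qed
    then show ?thesis using invW zK w unfolding W0_def by blast
  qed
  moreover obtain N where "(br z ^^ N) w1 = 0"
    using nil unfolding ad_nilpotent_def by blast
  ultimately obtain w where w: "w \<in> W0" "w \<notin> U" "br z w \<in> U"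
    using funpow_last_outside[where f = "br z" and N = N and w = w1 and U = U and W = W0] w1 vec.subspace_0[OF sU]
    unfolding W0_def by auto
  have "br k w \<in> U" if "k \<in> K" for k
  proof -
    obtain h c where "h \<in> H" and "k = h + c *s z"
      using span_insert_subspace_decomp[OF sH] \<open>k \<in> K\<close> K by blast
    then show ?thesis
      using w sU unfolding W0_def
      by (auto simp: bracket_add_left bracket_scale_left vec.subspace_add vec.subspace_scale)
  qed
  then show ?thesis using w unfolding W0_def by blast
qed

lemma ex_maximal_proper_lie_subalgebra:
  assumes "vec.subspace K" and "\<not> K \<subseteq> {0}"
  obtains H where "lie_subalgebra br H" and "H \<subset> K"
    and "\<And>H'. lie_subalgebra br H' \<Longrightarrow> H' \<subset> K \<Longrightarrow> \<not> H \<subset> H'"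
proof -
  let ?P = "\<lambda>H. lie_subalgebra br H \<and> H \<subset> K"
  have "?P {0}"
    using assms vec.subspace_0[OF assms(1)] unfolding lie_subalgebra_def
    by (auto simp: vec.subspace_def)
  then have "\<exists>H. ?P H \<and> (\<forall>H'. ?P H' \<longrightarrow> \<not> H \<subset> H')"
    by (rule ex_maximal_subspace) (simp add: lie_subalgebra_def)
  then show ?thesis
    using that by blast
qed

lemma engel_lemma:
  assumes "lie_subalgebra br K" and "\<And>x. x \<in> K \<Longrightarrow> ad_nilpotent br x"
    and "vec.subspace U" and "U \<subset> W"
    and "\<And>k u. k \<in> K \<Longrightarrow> u \<in> U \<Longrightarrow> br k u \<in> U"
    and "\<And>k w. k \<in> K \<Longrightarrow> w \<in> W \<Longrightarrow> br k w \<in> W"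
  shows "\<exists>w\<in>W. w \<notin> U \<and> (\<forall>k\<in>K. br k w \<in> U)"
  using assms
proof (induction "vec.dim K" arbitrary: K U W rule: less_induct)
  case less
  have sK: "vec.subspace K" and cK: "\<And>a b. a \<in> K \<Longrightarrow> b \<in> K \<Longrightarrow> br a b \<in> K"
    using less.prems(1) unfolding lie_subalgebra_def by auto
  show ?case
  proof (cases "K \<subseteq> {0}")
    case True
    obtain w where "w \<in> W" "w \<notin> U"
      using less.prems(4) by blast
    moreover have "br k w \<in> U" if "k \<in> K" for k
      using True that vec.subspace_0[OF less.prems(3)] by auto
    ultimately show ?thesis by blast
  next
    case False
    obtain H where subH: "lie_subalgebra br H" and HK: "H \<subset> K"
      and maxH: "\<And>H'. lie_subalgebra br H' \<Longrightarrow> H' \<subset> K \<Longrightarrow> \<not> H \<subset> H'"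
      using ex_maximal_proper_lie_subalgebra[OF sK False] by blast
    have sH: "vec.subspace H" and cH: "\<And>a b. a \<in> H \<Longrightarrow> b \<in> H \<Longrightarrow> br a b \<in> H"
      using subH unfolding lie_subalgebra_def by auto
    have dim_H: "vec.dim H < vec.dim K"
      by (rule dim_psubset_subspace[OF sH sK HK])
    have nil_H: "\<And>x. x \<in> H \<Longrightarrow> ad_nilpotent br x"
      using less.prems(2) HK by blast
    \<comment> \<open>Engel's lemma for H acting on K/H yields an element normalising H.\<close>
    have "\<exists>z\<in>K. z \<notin> H \<and> (\<forall>h\<in>H. br h z \<in> H)"
      by (rule less.hyps[OF dim_H subH nil_H sH HK]) (use cH cK HK in auto)
    then obtain z where zK: "z \<in> K" and zH: "z \<notin> H" and norm: "\<And>h. h \<in> H \<Longrightarrow> br h z \<in> H"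
      by blast
    let ?H' = "vec.span (insert z H)"
    have "lie_subalgebra br ?H'"
      by (rule lie_subalgebra_span_insert[OF subH norm])
    moreover have "?H' \<subseteq> K"
      using zK HK sK by (intro vec.span_minimal) auto
    moreover have "H \<subset> ?H'"
      using zH vec.span_base[of z "insert z H"] vec.span_superset[of "insert z H"] by blast
    ultimately have K: "K = ?H'"
      using maxH HK by blast
    have "\<exists>w1\<in>W. w1 \<notin> U \<and> (\<forall>h\<in>H. br h w1 \<in> U)"
      by (rule less.hyps[OF dim_H subH nil_H less.prems(3,4)]) (use less.prems(5,6) HK in auto)
    then obtain w1 where "w1 \<in> W" "w1 \<notin> U" "\<forall>h\<in>H. br h w1 \<in> U"
      by blast
    then show ?thesis
      using engel_step[OF K sH norm less.prems(2)[OF zK] less.prems(3,5,6)] by blast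
  qed
qed

lemma subspace_upper_central: "vec.subspace (upper_central br i)"
  by (induction i) (auto simp: vec.subspace_def bracket_add_right bracket_scale_right)

lemma upper_central_mono: "upper_central br i \<subseteq> upper_central br (Suc i)"
  by (induction i) auto

lemma bracket_upper_central: "v \<in> upper_central br i \<Longrightarrow> br x v \<in> upper_central br i"
  using upper_central_mono by (cases i) auto

lemma lower_central_subset_upper_central:
  assumes "upper_central br m = UNIV"
  shows "lower_central br k \<subseteq> upper_central br (m - k)"
proof (induction k)
  case 0
  then show ?case using assms by simp
next
  case (Suc k)
  have "br a b \<in> upper_central br (m - Suc k)" if "b \<in> lower_central br k" for a b
  proof (cases "m - k")
    case 0
    then show ?thesis using Suc that by auto
  next
    case (Suc j)
    then have "m - Suc k = j" by simp
    then show ?thesis using Suc \<open>lower_central br k \<subseteq> _\<close> that by auto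
  qed
  then have "{br a b |a b. b \<in> lower_central br k} \<subseteq> upper_central br (m - Suc k)"
    by blast
  then show ?case
    by (simp add: vec.span_minimal subspace_upper_central)
qed

context
  assumes nil: "\<And>x. ad_nilpotent br x"
begin

lemma upper_central_psubset:
  assumes "upper_central br i \<noteq> UNIV"
  shows "upper_central br i \<subset> upper_central br (Suc i)"
proof -
  have "lie_subalgebra br UNIV"
    unfolding lie_subalgebra_def by (simp add: vec.subspace_UNIV)
  then have "\<exists>w\<in>UNIV. w \<notin> upper_central br i \<and> (\<forall>k\<in>UNIV. br k w \<in> upper_central br i)"
    by (rule engel_lemma) (use nil assms subspace_upper_central bracket_upper_central in auto)
  then obtain w where "w \<notin> upper_central br i" "\<forall>k. br k w \<in> upper_central br i"
    by blast
  then show ?thesis using upper_central_mono[of i] by auto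
qed

lemma upper_central_eq_UNIV_or_dim_ge:
  "upper_central br i = UNIV \<or> i \<le> vec.dim (upper_central br i)"
proof (induction i)
  case (Suc i)
  show ?case
  proof (cases "upper_central br (Suc i) = UNIV")
    case False
    then have "upper_central br i \<noteq> UNIV"
      using upper_central_mono[of i] by auto
    then show ?thesis
      using Suc dim_psubset_subspace[OF subspace_upper_central subspace_upper_central
          upper_central_psubset] by fastforce
  qed simp
qed simp

lemma upper_central_card: "upper_central br CARD('n) = UNIV"
proof (rule ccontr)
  assume ne: "upper_central br CARD('n) \<noteq> UNIV"
  then have "CARD('n) \<le> vec.dim (upper_central br CARD('n))"
    using upper_central_eq_UNIV_or_dim_ge by blast
  moreover have "vec.dim (upper_central br CARD('n)) < vec.dim (UNIV :: ('k^'n) set)"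
    using dim_psubset_subspace[OF subspace_upper_central vec.subspace_UNIV] ne by blast
  ultimately show False
    using dim_subset_UNIV_cart_gen[of "UNIV :: ('k^'n) set"] by simp
qed

theorem engel: "nilpotent_lie br"
proof -
  have "lower_central br CARD('n) \<subseteq> {0}"
    using lower_central_subset_upper_central[OF upper_central_card, of "CARD('n)"] by simp
  moreover have "0 \<in> lower_central br CARD('n)"
    by (cases "CARD('n)") (auto simp: vec.span_zero)
  ultimately show ?thesis unfolding nilpotent_lie_def by blast
qed

end

end

section \<open>Characteristic polynomials and Cayley-Hamilton\<close>

definition const_poly_matrix :: "'a::zero^'n^'m \<Rightarrow> 'a poly^'n^'m" where
  "const_poly_matrix M = (\<chi> i j. [:M $ i $ j:])"

definition charmat :: "'a::comm_ring_1^'n^'n \<Rightarrow> 'a poly^'n^'n" where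
  "charmat M = (\<chi> i j. (if i = j then [:0, 1:] else 0) - [:M $ i $ j:])"

definition adjugate :: "'a::comm_ring_1^'n^'n \<Rightarrow> 'a^'n^'n" where
  "adjugate A = (\<chi> j k. det (\<chi> i. if i = k then axis j 1 else row i A))"

fun matrix_power :: "'a::semiring_1^'n^'n \<Rightarrow> nat \<Rightarrow> 'a^'n^'n" where
  "matrix_power M 0 = mat 1"
| "matrix_power M (Suc k) = M ** matrix_power M k"

text \<open>The polynomial matrix \<open>\<Sum>l<k. t^(k-1-l) M^l\<close>, the quotient of \<open>t^k - M^k\<close>
by \<open>t - M\<close>.\<close>
fun charmat_power_quotient :: "'a::comm_ring_1^'n^'n \<Rightarrow> nat \<Rightarrow> 'a poly^'n^'n" where
  "charmat_power_quotient M 0 = 0"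
| "charmat_power_quotient M (Suc k) =
     (\<chi> i j. [:0, 1:] * charmat_power_quotient M k $ i $ j + [:matrix_power M k $ i $ j:])"

lemma const_poly_matrix_eq_0_iff: "const_poly_matrix M = 0 \<longleftrightarrow> M = 0"
  by (simp add: const_poly_matrix_def vec_eq_iff)

lemma matrix_mul_adjugate:
  fixes A :: "'a::comm_ring_1^'n^'n"
  shows "A ** adjugate A = mat (det A)"
proof -
  have "(\<Sum>j\<in>UNIV. A$m$j * det (\<chi> i. if i = k then axis j 1 else row i A))
      = det (\<chi> i. if i = k then row m A else row i A)" for m k
  proof -
    have "(\<Sum>j\<in>UNIV. A$m$j * det (\<chi> i. if i = k then axis j 1 else row i A))
        = (\<Sum>j\<in>UNIV. det (\<chi> i. if i = k then A$m$j *s axis j 1 else row i A))"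
      by (simp add: det_row_mul)
    also have "\<dots> = det (\<chi> i. if i = k then (\<Sum>j\<in>UNIV. A$m$j *s axis j 1) else row i A)"
      by (rule det_linear_row_sum[symmetric]) simp
    also have "(\<Sum>j\<in>UNIV. A$m$j *s axis j (1::'a)) = row m A"
      by (simp add: vec_eq_iff sum_component axis_def row_def if_distrib cong: if_cong)
    finally show ?thesis .
  qed
  moreover have "det (\<chi> i. if i = k then row m A else row i A) = (if m = k then det A else 0)"
    for m k
  proof (cases "m = k")
    case True
    then have "(\<chi> i. if i = k then row m A else row i A) = A"
      by (simp add: vec_eq_iff row_def)
    then show ?thesis using True by simp
  next
    case False
    then show ?thesis
      by (auto intro: det_identical_rows[of k m] simp: row_def vec_eq_iff)
  qed
  ultimately show ?thesis
    by (simp add: vec_eq_iff matrix_matrix_mult_def adjugate_def mat_def)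
qed

lemma charmat_mult_const_poly_matrix:
  "charmat M ** const_poly_matrix X = (\<chi> i j. [:0, 1:] * [:X $ i $ j:] - [:(M ** X) $ i $ j:])"
proof -
  have "(\<Sum>j\<in>UNIV. charmat M $ m $ j * [:X $ j $ q:])
      = (\<Sum>j\<in>UNIV. if m = j then [:0, 1:] * [:X $ j $ q:] else 0) - (\<Sum>j\<in>UNIV. [:M $ m $ j * X $ j $ q:])"
    for m q
  proof -
    have "charmat M $ m $ j * [:X $ j $ q:]
        = (if m = j then [:0, 1:] * [:X $ j $ q:] else 0) - [:M $ m $ j * X $ j $ q:]" for j
      by (cases "m = j") (simp_all add: charmat_def left_diff_distrib)
    then show ?thesis by (simp add: sum_subtractf)
  qed
  then show ?thesis
    by (simp add: vec_eq_iff matrix_matrix_mult_def const_poly_matrix_def sum_to_poly)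
qed

lemma charmat_mult_power_quotient:
  "charmat M ** charmat_power_quotient M k
     = mat ([:0, 1:] ^ k) - const_poly_matrix (matrix_power M k)"
proof (induction k)
  case 0
  then show ?case
    by (simp add: vec_eq_iff const_poly_matrix_def mat_def)
next
  case (Suc k)
  have "(charmat M ** charmat_power_quotient M (Suc k)) $ m $ q
      = [:0, 1:] * (charmat M ** charmat_power_quotient M k) $ m $ q
        + (charmat M ** const_poly_matrix (matrix_power M k)) $ m $ q" for m q
    by (simp add: matrix_matrix_mult_def const_poly_matrix_def distrib_left sum.distrib
        sum_distrib_left algebra_simps)
  then show ?case
    unfolding Suc charmat_mult_const_poly_matrix
    by (simp add: vec_eq_iff const_poly_matrix_def mat_def algebra_simps)
qed

text \<open>Comparing coefficients of highest degree: \<open>t - M\<close> raises the maximal degree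
of the entries of a nonzero polynomial matrix.\<close>
lemma charmat_mult_eq_const_imp_zero:
  fixes M :: "'a::comm_ring_1^'n^'n"
  assumes "charmat M ** C = const_poly_matrix B"
  shows "C = 0"
proof (rule ccontr)
  assume "C \<noteq> 0"
  let ?D = "{degree (C $ a $ b) | a b. C $ a $ b \<noteq> 0}"
  have fin: "finite ?D"
    by (rule finite_subset[of _ "(\<lambda>(a, b). degree (C $ a $ b)) ` UNIV"]) auto
  have "?D \<noteq> {}"
    using \<open>C \<noteq> 0\<close> by (auto simp: vec_eq_iff)
  then obtain i l where Cil: "C $ i $ l \<noteq> 0" and di: "degree (C $ i $ l) = Max ?D"
    using Max_in[OF fin] by auto
  have le: "degree (C $ a $ l) \<le> Max ?D" for a
    using Max_ge[OF fin] by (cases "C $ a $ l = 0") auto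
  have "coeff (charmat M $ i $ j * C $ j $ l) (Suc (Max ?D))
      = (if i = j then coeff (C $ j $ l) (Max ?D) else 0)" for j
  proof -
    have "coeff ([:M $ i $ j:] * C $ j $ l) (Suc (Max ?D)) = 0"
      using le[of j] by (simp add: coeff_eq_0)
    then show ?thesis
      by (cases "i = j") (simp_all add: charmat_def left_diff_distrib)
  qed
  then have "coeff ((charmat M ** C) $ i $ l) (Suc (Max ?D)) = lead_coeff (C $ i $ l)"
    by (simp add: matrix_matrix_mult_def coeff_sum di)
  moreover have "lead_coeff (C $ i $ l) \<noteq> 0"
    using Cil by simp
  ultimately show False
    using assms by (simp add: const_poly_matrix_def)
qed

theorem cayley_hamilton_nilpotent:
  fixes M :: "'a::comm_ring_1^'n^'n"
  assumes "det (charmat M) = [:0, 1:] ^ CARD('n)"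
  shows "matrix_power M CARD('n) = 0"
proof -
  let ?C = "adjugate (charmat M) - charmat_power_quotient M CARD('n)"
  have "charmat M ** ?C
      = charmat M ** adjugate (charmat M) - charmat M ** charmat_power_quotient M CARD('n)"
    by (simp add: matrix_matrix_mult_def vec_eq_iff right_diff_distrib sum_subtractf)
  also have "\<dots> = const_poly_matrix (matrix_power M CARD('n))"
    unfolding matrix_mul_adjugate charmat_mult_power_quotient assms by simp
  finally have C: "charmat M ** ?C = const_poly_matrix (matrix_power M CARD('n))" .
  then have "?C = 0"
    by (rule charmat_mult_eq_const_imp_zero)
  then have "const_poly_matrix (matrix_power M CARD('n)) = 0"
    using C by (simp add: matrix_matrix_mult_def vec_eq_iff)
  then show ?thesis
    by (simp add: const_poly_matrix_eq_0_iff)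
qed

lemma degree_charmat_entry: "degree (charmat M $ i $ j) \<le> (if i = j then 1 else 0)"
  unfolding charmat_def by (cases "i = j") auto

lemma degree_prod_charmat_le:
  fixes M :: "'a::comm_ring_1^'n^'n"
  shows "degree (\<Prod>i\<in>UNIV. charmat M $ i $ p i) \<le> card {i. p i = i}"
proof -
  have "degree (\<Prod>i\<in>UNIV. charmat M $ i $ p i) \<le> (\<Sum>i\<in>UNIV. degree (charmat M $ i $ p i))"
    using degree_prod_sum_le[of UNIV "\<lambda>i. charmat M $ i $ p i"] by (simp add: o_def)
  also have "\<dots> \<le> (\<Sum>i\<in>UNIV. if p i = i then 1 else 0)"
  proof (rule sum_mono)
    fix i
    show "degree (charmat M $ i $ p i) \<le> (if p i = i then 1 else 0)"
      using degree_charmat_entry[of M i "p i"] by (auto split: if_splits)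
  qed
  also have "\<dots> = card {i. p i = i}"
    by (simp add: sum.If_cases)
  finally show ?thesis .
qed

lemma coeff_det_charmat:
  fixes M :: "'a::comm_ring_1^'n^'n"
  shows "coeff (det (charmat M)) k
    = (\<Sum>p\<in>{p. p permutes UNIV}. of_int (sign p) * coeff (\<Prod>i\<in>UNIV. charmat M $ i $ p i) k)"
  unfolding det_def coeff_sum by (simp add: of_int_poly)

lemma coeff_det_charmat_gt:
  fixes M :: "'a::comm_ring_1^'n^'n"
  assumes "CARD('n) < k"
  shows "coeff (det (charmat M)) k = 0"
proof -
  have "coeff (\<Prod>i\<in>UNIV. charmat M $ i $ p i) k = 0" for p
    using degree_prod_charmat_le[of M p] card_mono[of UNIV "{i. p i = i}"] assms
    by (intro coeff_eq_0) fastforce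
  then show ?thesis unfolding coeff_det_charmat by simp
qed

lemma coeff_det_charmat_card:
  fixes M :: "'a::idom^'n^'n"
  shows "coeff (det (charmat M)) CARD('n) = 1"
proof -
  have "coeff (\<Prod>i\<in>UNIV. charmat M $ i $ p i) CARD('n) = (if p = id then 1 else 0)" for p
  proof (cases "p = id")
    case False
    then have "{i. p i = i} \<subset> UNIV"
      by (auto simp: fun_eq_iff)
    then show ?thesis
      using False degree_prod_charmat_le[of M p] psubset_card_mono[of UNIV "{i. p i = i}"]
      by (simp add: coeff_eq_0)
  next
    case True
    have "charmat M $ i $ i = [:- M $ i $ i, 1:]" for i
      by (simp add: charmat_def)
    moreover have "degree (\<Prod>i\<in>UNIV. [:- M $ i $ i, 1:]) = CARD('n)"
      by (subst degree_prod_eq_sum_degree) auto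
    moreover have "lead_coeff (\<Prod>i\<in>UNIV. [:- M $ i $ i, 1:]) = 1"
      by (simp add: lead_coeff_prod)
    ultimately show ?thesis using True by simp
  qed
  then have "coeff (det (charmat M)) CARD('n)
      = (\<Sum>p\<in>{p. p permutes (UNIV :: 'n set)}. if p = id then 1 else 0)"
    unfolding coeff_det_charmat by (intro sum.cong) (auto simp: sign_id)
  also have "\<dots> = 1"
    by (simp add: permutes_id finite_permutations)
  finally show ?thesis .
qed

lemma det_charmat_eq_power_iff:
  fixes M :: "'a::idom^'n^'n"
  shows "det (charmat M) = [:0, 1:] ^ CARD('n) \<longleftrightarrow> (\<forall>k<CARD('n). coeff (det (charmat M)) k = 0)"
proof -
  have "coeff ([:0, 1:] ^ CARD('n)) k = (if k = CARD('n) then 1 else (0::'a))" for k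
    by (simp add: monom_altdef[of 1, simplified, symmetric] coeff_monom)
  then show ?thesis
    using coeff_det_charmat_card[of M] coeff_det_charmat_gt[of _ M]
    by (auto simp: poly_eq_iff) (metis linorder_neqE_nat)
qed

text \<open>If \<open>M\<^sup>2 = 0\<close> then \<open>(t - M)(t + M) = t\<^sup>2\<close>, so \<open>det (t - M)\<close> divides
\<open>t\<^sup>2\<^sup>n\<close>; being of degree \<open>n\<close>, it must vanish at 0 to order \<open>n\<close>.\<close>
lemma det_charmat_square_zero:
  fixes M :: "'a::idom^'n^'n"
  assumes "M ** M = 0"
  shows "det (charmat M) = [:0, 1:] ^ CARD('n)"
proof -
  let ?t = "[:0, 1:] :: 'a poly" and ?n = "CARD('n)"
  have nz: "det (charmat N) \<noteq> 0" for N :: "'a^'n^'n"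
    using coeff_det_charmat_card[of N] by auto
  have deg: "degree (det (charmat N)) \<le> ?n" for N :: "'a^'n^'n"
    by (rule degree_le) (simp add: coeff_det_charmat_gt)
  have "charmat (- M) = mat ?t + const_poly_matrix M"
    by (simp add: vec_eq_iff charmat_def const_poly_matrix_def mat_def)
  then have "charmat M ** charmat (- M) = charmat M ** mat ?t + charmat M ** const_poly_matrix M"
    by (simp only: matrix_add_ldistrib)
  also have "charmat M ** mat ?t = (\<chi> i j. charmat M $ i $ j * ?t)"
    by (simp add: vec_eq_iff matrix_matrix_mult_def mat_def if_distrib cong: if_cong)
  also have "(\<chi> i j. charmat M $ i $ j * ?t) + charmat M ** const_poly_matrix M = mat (?t ^ 2)"
    unfolding charmat_mult_const_poly_matrix assms
    by (simp add: vec_eq_iff charmat_def mat_def power2_eq_square algebra_simps)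
  finally have "charmat M ** charmat (- M) = mat (?t ^ 2)" .
  then have "det (charmat M) * det (charmat (- M)) = det (mat (?t ^ 2) :: 'a poly^'n^'n)"
    by (simp add: det_mul[symmetric])
  also have "\<dots> = [:- 0, 1:] ^ (2 * ?n)"
    by (subst det_diagonal) (simp_all add: mat_def power_mult)
  finally have "order 0 (det (charmat M) * det (charmat (- M))) = 2 * ?n"
    by (simp only: order_power_n_n)
  then have "?n \<le> order 0 (det (charmat M))"
    using order_mult[of "det (charmat M)" "det (charmat (- M))" 0] nz
      order_degree[OF nz, of 0 "- M"] deg[of "- M"] by simp
  then have "[:- 0, 1:] ^ ?n dvd det (charmat M)"
    using order_1[of 0 "det (charmat M)"] le_imp_power_dvd dvd_trans by blast
  then obtain q where "det (charmat M) = monom 1 ?n * q"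
    by (auto simp: monom_altdef elim: dvdE)
  then show ?thesis
    unfolding det_charmat_eq_power_iff by (simp add: coeff_monom_mult)
qed

section \<open>Regular Lie algebras\<close>

lemma ad_charpoly_eq_det_charmat: "ad_charpoly br x = det (charmat (ad_matrix br x))"
  unfolding ad_charpoly_def charmat_def ..

lemma lie_rank_le_card: "lie_rank br \<le> CARD('n)"
  for br :: "'k::field^'n \<Rightarrow> 'k^'n \<Rightarrow> 'k^'n"
  unfolding lie_rank_def ad_charpoly_eq_det_charmat
  by (rule Least_le) (simp add: coeff_det_charmat_card)

lemma lie_rank_eq_card_if_regular_square_zero:
  fixes br :: "'k::field^'n \<Rightarrow> 'k^'n \<Rightarrow> 'k^'n"
  assumes "regular_element br a" and "ad_matrix br a ** ad_matrix br a = 0"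
  shows "lie_rank br = CARD('n)"
proof (rule ccontr)
  assume "lie_rank br \<noteq> CARD('n)"
  then have "lie_rank br < CARD('n)"
    using lie_rank_le_card[of br] by simp
  then have "coeff (ad_charpoly br a) (lie_rank br) = 0"
    using det_charmat_square_zero[OF assms(2)]
    unfolding ad_charpoly_eq_det_charmat det_charmat_eq_power_iff by blast
  then show False
    using assms(1) unfolding regular_element_def by simp
qed

lemma ad_charpoly_eq_power_if_lie_rank_eq_card:
  fixes br :: "'k::field^'n \<Rightarrow> 'k^'n \<Rightarrow> 'k^'n"
  assumes "lie_rank br = CARD('n)"
  shows "ad_charpoly br x = [:0, 1:] ^ CARD('n)"
  unfolding ad_charpoly_eq_det_charmat det_charmat_eq_power_iff
  using not_less_Least[of _ "\<lambda>r. \<exists>x. coeff (ad_charpoly br x) r \<noteq> 0"] assms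
  unfolding lie_rank_def ad_charpoly_eq_det_charmat by auto

context lie_alg
begin

lemma lie_ideal_derived_series:
  assumes "lie_ideal br I"
  shows "lie_ideal br (derived_series br I k)"
proof (induction k)
  case 0
  then show ?case using assms by simp
next
  case (Suc k)
  let ?D = "derived_series br I k"
  let ?G = "{br a b | a b. a \<in> ?D \<and> b \<in> ?D}"
  have D: "br x y \<in> ?D" if "y \<in> ?D" for x y
    using Suc that unfolding lie_ideal_def by blast
  have "br x y \<in> vec.span ?G" if "y \<in> vec.span ?G" for x y
  proof (rule bracket_span_closed[OF vec.subspace_span _ that])
    fix g assume "g \<in> ?G"
    then obtain a b where g: "g = br a b" and ab: "a \<in> ?D" "b \<in> ?D" by blast
    have "br a (br x b) \<in> vec.span ?G" and "br (br x a) b \<in> vec.span ?G"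
      using ab D by (blast intro: vec.span_base)+
    then show "br x g \<in> vec.span ?G"
      unfolding g bracket_leibniz[of x a b] by (rule vec.span_add)
  qed
  then show ?case
    unfolding lie_ideal_def derived_series.simps by (simp add: vec.subspace_span)
qed

text \<open>The last nonzero term of the derived series of a solvable ideal.\<close>
lemma ex_abelian_ideal_if_not_semisimple:
  assumes "\<not> semisimple br"
  obtains J where "lie_ideal br J" and "J \<noteq> {0}" and "\<And>a b. a \<in> J \<Longrightarrow> b \<in> J \<Longrightarrow> br a b = 0"
proof -
  obtain I where I: "lie_ideal br I" and "solvable_subalg br I" and "I \<noteq> {0}"
    using assms unfolding semisimple_def by blast
  then have ex: "\<exists>k. derived_series br I k = {0}"
    unfolding solvable_subalg_def by blast
  define k where "k = (LEAST k. derived_series br I k = {0})"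
  have "k \<noteq> 0"
    using LeastI_ex[OF ex] \<open>I \<noteq> {0}\<close> unfolding k_def by (metis derived_series.simps(1))
  then obtain j where j: "k = Suc j"
    using not0_implies_Suc by blast
  have "derived_series br I j \<noteq> {0}"
    using not_less_Least[of j "\<lambda>k. derived_series br I k = {0}"] j unfolding k_def by simp
  moreover have "br a b = 0" if "a \<in> derived_series br I j" "b \<in> derived_series br I j" for a b
  proof -
    have "br a b \<in> derived_series br I (Suc j)"
      using that by (auto intro: vec.span_base)
    then show ?thesis
      using LeastI_ex[OF ex] j unfolding k_def by simp
  qed
  ultimately show ?thesis
    using that lie_ideal_derived_series[OF I] by blast
qed

lemma ad_matrix_mult_vec: "ad_matrix br x *v v = br x v"
proof -
  have "ad_matrix br x = matrix (br x)"
    unfolding ad_matrix_def matrix_def ..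
  then show ?thesis
    using matrix_works[OF linear_bracket] by simp
qed

lemma ad_matrix_square_zero_if_abelian_ideal:
  assumes "lie_ideal br J" and "\<And>a b. a \<in> J \<Longrightarrow> b \<in> J \<Longrightarrow> br a b = 0" and "a \<in> J"
  shows "ad_matrix br a ** ad_matrix br a = 0"
proof -
  have "br a (br a y) = 0" for y
  proof -
    have "br y a \<in> J"
      using assms(1,3) unfolding lie_ideal_def by blast
    then have "br a y \<in> J"
      using assms(1) bracket_antisym[of a y] unfolding lie_ideal_def by (metis vec.subspace_neg)
    then show ?thesis using assms(2,3) by blast
  qed
  then show ?thesis
    unfolding matrix_eq by (simp add: matrix_vector_mul_assoc[symmetric] ad_matrix_mult_vec)
qed

lemma ad_nilpotent_if_ad_charpoly_eq_power:
  assumes "ad_charpoly br x = [:0, 1:] ^ CARD('n)"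
  shows "ad_nilpotent br x"
proof -
  have "matrix_power (ad_matrix br x) k *v v = (br x ^^ k) v" for k v
    by (induction k arbitrary: v)
      (simp_all add: matrix_vector_mul_assoc[symmetric] ad_matrix_mult_vec)
  moreover have "matrix_power (ad_matrix br x) CARD('n) = 0"
    using assms unfolding ad_charpoly_eq_det_charmat by (rule cayley_hamilton_nilpotent)
  ultimately show ?thesis
    unfolding ad_nilpotent_def by (metis matrix_vector_mult_0)
qed

end

theorem lemma3:
  fixes br :: "'k::field^'n \<Rightarrow> 'k^'n \<Rightarrow> 'k^'n"
  assumes "infinite (UNIV :: 'k set)"
    and "lie_algebra br"
    and "regular_lie_algebra br"
    and "\<not> semisimple br"
  shows "nilpotent_lie br"
proof -
  interpret lie_alg br by (rule lie_alg.intro) (fact assms(2))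
  obtain J where J: "lie_ideal br J" "J \<noteq> {0}" and abelian: "\<And>a b. a \<in> J \<Longrightarrow> b \<in> J \<Longrightarrow> br a b = 0"
    using ex_abelian_ideal_if_not_semisimple[OF assms(4)] by blast
  then obtain a where a: "a \<in> J" "a \<noteq> 0"
    using vec.subspace_0 unfolding lie_ideal_def by blast
  have "lie_rank br = CARD('n)"
  proof (rule lie_rank_eq_card_if_regular_square_zero)
    show "regular_element br a"
      using assms(3) a unfolding regular_lie_algebra_def by blast
    show "ad_matrix br a ** ad_matrix br a = 0"
      by (rule ad_matrix_square_zero_if_abelian_ideal[OF J(1) abelian a(1)])
  qed
  then have "ad_nilpotent br x" for x
    by (intro ad_nilpotent_if_ad_charpoly_eq_power ad_charpoly_eq_power_if_lie_rank_eq_card)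
  then show ?thesis
    by (rule engel)
qed

end
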